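(* Let $I=(\mathcal{M},[N],(u_i)_{i\in[N]})$ be a non-negative instance, $\lambda\ge0$, $\varepsilon>0$, and suppose the $\lambda$-max-min problem for $I$ has a solution. Let $0<\alpha<1$, $0<\beta<1$ with $\alpha\beta>1-\varepsilon$. For each $i$ let $c_i$ be any real with $\alpha\cdot MmS_{u_i}^N(\mathcal{M})\le c_i\le MmS_{u_i}^N(\mathcal{M})$, and let $[N]_{>0}:=\{i: c_i>0\}$. If $[N]_{>0}=\emptyset$, let $S^\varepsilon$ be any allocation. Otherwise let $u_i'(j):=u_i(j)/c_i$ for $i\in[N]_{>0}$, let $\lambda^*:=\max\{\min_{i\in[N]_{>0}}u_i'(S_i): (S_i)_{i\in[N]_{>0}}\text{ a partition of }\mathcal{M}\text{ indexed by }[N]_{>0}\}$, let $(S^\varepsilon_i)_{i\in[N]_{>0}}$ be any partition of $\mathcal{M}$ indexed by $[N]_{>0}$ with $u_i'(S^\varepsilon_i)\ge\beta\lambda^*$ for all $i\in[N]_{>0}$, and set $S^\varepsilon_i:=\emptyset$ for $i\notin[N]_{>0}$. Then $S^\varepsilon=(S^\varepsilon_1,\dots,S^\varepsilon_N)$ is a solution of the $((1-\varepsilon)\lambda)$-max-min problem for $I$, i.e. $u_i(S^\varepsilon_i)\ge(1-\varepsilon)\lambda\cdot MmS_{u_i}^N(\mathcal{M})$ for all $i$.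
   Context: A non-negative instance: finite item set $\mathcal{M}$, agents $[N]=\{1,\dots,N\}$, additive utilities $u_i$ with $u_i(j)\ge0$. $\Pi_N(\mathcal{M})$ is the set of ordered $N$-partitions of $\mathcal{M}$ (parts may be empty). $MmS_{u}^N(\mathcal{M}):=\max_{(S_1,\ldots,S_N)\in\Pi_N(\mathcal{M})}\min_{j} u(S_j)$. An allocation $S$ solves the $\mu$-max-min problem for $I$ iff $u_i(S_i)\ge\mu\cdot MmS_{u_i}^N(\mathcal{M})$ for all $i$. *)

theory Defs
  imports Main "HOL.Real"
begin

text \<open>Values of S outside K are irrelevant.\<close>
definition is_partition :: "nat set \<Rightarrow> 'a set \<Rightarrow> (nat \<Rightarrow> 'a set) \<Rightarrow> bool" where
  "is_partition K M S \<longleftrightarrow>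
     (\<forall>i\<in>K. S i \<subseteq> M) \<and> (\<Union>i\<in>K. S i) = M \<and>
     (\<forall>i\<in>K. \<forall>j\<in>K. i \<noteq> j \<longrightarrow> S i \<inter> S j = {})"

definition maxmin_val :: "nat set \<Rightarrow> 'a set \<Rightarrow> (nat \<Rightarrow> 'a \<Rightarrow> real) \<Rightarrow> real" where
  "maxmin_val K M v = Max {Min ((\<lambda>i. sum (v i) (S i)) ` K) | S. is_partition K M S}"

definition MmS :: "('a \<Rightarrow> real) \<Rightarrow> nat \<Rightarrow> 'a set \<Rightarrow> real" where
  "MmS u N M = maxmin_val {1..N} M (\<lambda>_. u)"

definition solves_maxmin :: "real \<Rightarrow> 'a set \<Rightarrow> nat \<Rightarrow> (nat \<Rightarrow> 'a \<Rightarrow> real) \<Rightarrow> (nat \<Rightarrow> 'a set) \<Rightarrow> bool" where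
  "solves_maxmin \<mu> M N u S \<longleftrightarrow>
     is_partition {1..N} M S \<and> (\<forall>i\<in>{1..N}. sum (u i) (S i) \<ge> \<mu> * MmS (u i) N M)"

end

theory Submission
  imports Defs "HOL-Library.FuncSet"
begin

text \<open>Agents with \<open>c\<^sub>i \<le> 0\<close> have max-min share \<open>0\<close> and are satisfied by the empty bundle.
  For the agents \<open>i\<close> with \<open>c\<^sub>i > 0\<close>, take a \<open>\<lambda>\<close>-max-min solution and hand the bundles of
  all other agents to one of them: by monotonicity of the non-negative utilities this is a
  partition indexed by the positive agents in which each one gets at least
  \<open>\<lambda> MmS\<^sub>i \<ge> \<lambda> c\<^sub>i\<close>, so \<open>\<lambda>\<^sup>* \<ge> \<lambda>\<close>. Hence \<open>u\<^sub>i(S\<^sup>\<epsilon>\<^sub>i) \<ge> \<beta> \<lambda>\<^sup>* c\<^sub>i \<ge> \<alpha>\<beta> \<lambda> MmS\<^sub>i \<ge> (1-\<epsilon>) \<lambda> MmS\<^sub>i\<close>.\<close>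

lemma is_partition_part_subset:
  "is_partition K M S \<Longrightarrow> i \<in> K \<Longrightarrow> S i \<subseteq> M"
  unfolding is_partition_def by blast

lemma is_partition_extend_empty:
  assumes "is_partition P M S" "P \<subseteq> K" "\<forall>i\<in>K - P. S i = {}"
  shows "is_partition K M S"
proof -
  have "(\<Union>i\<in>K. S i) = (\<Union>i\<in>P. S i)"
    using assms(2,3) by blast
  with assms show ?thesis
    unfolding is_partition_def by (metis Diff_iff empty_subsetI inf_bot_left inf_bot_right subsetD)
qed

lemma is_partition_merge_into:
  assumes S: "is_partition K M S" and "P \<subseteq> K" and k: "k \<in> P"
  shows "is_partition P M (S(k := S k \<union> (\<Union>j\<in>K - P. S j)))"
proof -
  let ?T = "S(k := S k \<union> (\<Union>j\<in>K - P. S j))"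
  have disj: "S i \<inter> S j = {}" if "i \<in> K" "j \<in> K" "i \<noteq> j" for i j
    using S that unfolding is_partition_def by blast
  have "(\<Union>i\<in>P. ?T i) = (\<Union>i\<in>K. S i)"
    using \<open>P \<subseteq> K\<close> k by (auto split: if_splits)
  moreover have "?T i \<inter> ?T j = {}" if "i \<in> P" "j \<in> P" "i \<noteq> j" for i j
  proof -
    have "S i' \<inter> (\<Union>j\<in>K - P. S j) = {}" if "i' \<in> P" for i'
      using disj that \<open>P \<subseteq> K\<close> by blast
    then show ?thesis
      using that disj[of i j] \<open>P \<subseteq> K\<close> by auto
  qed
  moreover have "?T i \<subseteq> M" if "i \<in> P" for i
    using that S \<open>P \<subseteq> K\<close> unfolding is_partition_def by auto
  ultimately show ?thesis
    using S unfolding is_partition_def by auto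
qed

lemma finite_maxmin_candidates:
  assumes "finite K" "finite M"
  shows "finite {Min ((\<lambda>i. sum (v i) (S i)) ` K) | S. is_partition K M S}"
proof -
  let ?val = "\<lambda>T. Min ((\<lambda>i. sum (v i) (T i)) ` K)"
  have "{?val S | S. is_partition K M S} \<subseteq> ?val ` (PiE K (\<lambda>_. Pow M))"
  proof clarify
    fix S assume "is_partition K M S"
    then have "restrict S K \<in> PiE K (\<lambda>_. Pow M)"
      unfolding is_partition_def by auto
    moreover have "?val S = ?val (restrict S K)"
      by simp
    ultimately show "?val S \<in> ?val ` (PiE K (\<lambda>_. Pow M))"
      by blast
  qed
  moreover have "finite (PiE K (\<lambda>_. Pow M))"
    using assms by (simp add: finite_PiE)
  ultimately show ?thesis
    by (meson finite_surj)
qed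

lemma maxmin_val_ge:
  assumes "finite K" "K \<noteq> {}" "finite M" "is_partition K M S"
    and "\<forall>i\<in>K. x \<le> sum (v i) (S i)"
  shows "x \<le> maxmin_val K M v"
proof -
  have "x \<le> Min ((\<lambda>i. sum (v i) (S i)) ` K)"
    using assms by simp
  also have "\<dots> \<le> maxmin_val K M v"
    unfolding maxmin_val_def
    using finite_maxmin_candidates[OF assms(1,3)] assms(4) by (intro Max_ge) blast+
  finally show ?thesis .
qed

lemma maxmin_val_normalised_ge:
  assumes finK: "finite K" and finM: "finite M"
    and S: "is_partition K M S" and "P \<subseteq> K" "P \<noteq> {}"
    and nonneg: "\<forall>i\<in>K. \<forall>j\<in>M. u i j \<ge> 0"
    and good: "\<forall>i\<in>P. c i > 0 \<and> lam * c i \<le> sum (u i) (S i)"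
  shows "lam \<le> maxmin_val P M (\<lambda>i j. u i j / c i)"
proof -
  obtain k where k: "k \<in> P"
    using \<open>P \<noteq> {}\<close> by blast
  define T where "T = S(k := S k \<union> (\<Union>j\<in>K - P. S j))"
  have T: "is_partition P M T"
    unfolding T_def using is_partition_merge_into[OF S \<open>P \<subseteq> K\<close> k] .
  have "lam \<le> sum (\<lambda>j. u i j / c i) (T i)" if i: "i \<in> P" for i
  proof -
    have "sum (u i) (S i) \<le> sum (u i) (T i)"
      using is_partition_part_subset[OF T i] nonneg i \<open>P \<subseteq> K\<close> finM
      by (intro sum_mono2) (auto simp: T_def dest: finite_subset)
    then have "lam * c i \<le> sum (u i) (T i)"
      using good i by fastforce
    then show ?thesis
      using good i by (simp add: sum_divide_distrib[symmetric] pos_le_divide_eq)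
  qed
  then show ?thesis
    using finK \<open>P \<subseteq> K\<close> \<open>P \<noteq> {}\<close> finM T
    by (intro maxmin_val_ge[where S = T]) (auto intro: finite_subset)
qed

lemma sandwiched_share_nonneg:
  fixes alpha m c :: real
  assumes "alpha < 1" "alpha * m \<le> c" "c \<le> m"
  shows "0 \<le> m"
proof -
  have "0 \<le> (1 - alpha) * m"
    using assms by (simp add: algebra_simps)
  then show ?thesis
    using assms(1) by (simp add: zero_le_mult_iff)
qed

lemma sandwiched_share_zero:
  fixes alpha m c :: real
  assumes "0 < alpha" "alpha < 1" "alpha * m \<le> c" "c \<le> m" "c \<le> 0"
  shows "m = 0"
  using assms sandwiched_share_nonneg[of alpha m c] by (smt (verit) mult_pos_pos)

lemma approximate_share_bound:
  fixes alpha beta eps lam lam_star m c x :: real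
  assumes "0 < beta" "0 \<le> lam" "0 \<le> m" "1 - eps < alpha * beta"
    and "0 < c" "alpha * m \<le> c" "lam \<le> lam_star" "beta * lam_star \<le> x / c"
  shows "(1 - eps) * lam * m \<le> x"
proof -
  have "(1 - eps) * lam * m \<le> (alpha * m) * (beta * lam)"
  proof -
    have "(1 - eps) * (lam * m) \<le> (alpha * beta) * (lam * m)"
      using assms(2-4) by (intro mult_right_mono) auto
    then show ?thesis
      by (simp add: algebra_simps)
  qed
  also have "\<dots> \<le> c * (beta * lam)"
    using assms(1,2,6) by (simp add: mult_right_mono)
  also have "\<dots> \<le> c * (beta * lam_star)"
    using assms(1,5,7) by simp
  also have "\<dots> \<le> x"
    using assms(5,8) by (simp add: pos_le_divide_eq mult.commute)
  finally show ?thesis .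
qed

theorem theorem3:
  fixes M :: "'a set" and N :: nat and u :: "nat \<Rightarrow> 'a \<Rightarrow> real"
    and lam eps alpha beta :: real and c :: "nat \<Rightarrow> real"
    and P :: "nat set" and lam_star :: real
  assumes finM: "finite M"
    and nonneg: "\<forall>i\<in>{1..N}. \<forall>j\<in>M. u i j \<ge> 0"
    and lam: "lam \<ge> 0" and eps: "eps > 0"
    and sol: "\<exists>S. solves_maxmin lam M N u S"
    and alpha: "0 < alpha" "alpha < 1" and beta: "0 < beta" "beta < 1"
    and ab: "alpha * beta > 1 - eps"
    and c: "\<forall>i\<in>{1..N}. alpha * MmS (u i) N M \<le> c i \<and> c i \<le> MmS (u i) N M"
    and P_def: "P = {i\<in>{1..N}. c i > 0}"
    and lam_star_def: "lam_star = maxmin_val P M (\<lambda>i j. u i j / c i)"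
  shows "\<forall>Se. ((P = {} \<and> is_partition {1..N} M Se) \<or>
              (P \<noteq> {} \<and> is_partition P M Se \<and>
               (\<forall>i\<in>P. sum (\<lambda>j. u i j / c i) (Se i) \<ge> beta * lam_star) \<and>
               (\<forall>i\<in>{1..N} - P. Se i = {})))
           \<longrightarrow> solves_maxmin ((1 - eps) * lam) M N u Se"
proof (intro allI impI)
  fix Se
  assume Se: "(P = {} \<and> is_partition {1..N} M Se) \<or>
              (P \<noteq> {} \<and> is_partition P M Se \<and>
               (\<forall>i\<in>P. sum (\<lambda>j. u i j / c i) (Se i) \<ge> beta * lam_star) \<and>
               (\<forall>i\<in>{1..N} - P. Se i = {}))"
  have PN: "P \<subseteq> {1..N}"
    using P_def by auto
  have share_nonneg: "0 \<le> MmS (u i) N M" if "i \<in> {1..N}" for i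
    using c that alpha by (blast intro: sandwiched_share_nonneg)
  have share_zero: "MmS (u i) N M = 0" if "i \<in> {1..N} - P" for i
    using c that alpha P_def by (auto intro!: sandwiched_share_zero[where c = "c i"])
  have Se_partition: "is_partition {1..N} M Se"
    using Se PN by (auto intro: is_partition_extend_empty)
  have "(1 - eps) * lam * MmS (u i) N M \<le> sum (u i) (Se i)" if i: "i \<in> {1..N}" for i
  proof (cases "i \<in> P")
    case False
    then show ?thesis
      using i share_zero nonneg is_partition_part_subset[OF Se_partition i]
      by (auto intro!: sum_nonneg)
  next
    case True
    obtain S where S: "is_partition {1..N} M S"
        and S_share: "\<forall>k\<in>{1..N}. lam * MmS (u k) N M \<le> sum (u k) (S k)"
      using sol unfolding solves_maxmin_def by blast
    have "c k > 0 \<and> lam * c k \<le> sum (u k) (S k)" if "k \<in> P" for k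
      using that PN P_def c lam S_share
      by (auto intro: order_trans[OF mult_left_mono[where c = lam]])
    then have "lam \<le> lam_star"
      unfolding lam_star_def using PN True nonneg finM
      by (intro maxmin_val_normalised_ge[OF _ _ S]) auto
    then show ?thesis
      using True Se i c P_def share_nonneg beta lam ab
      by (intro approximate_share_bound[where alpha = alpha and beta = beta and c = "c i"
            and lam_star = lam_star]) (auto simp: sum_divide_distrib)
  qed
  then show "solves_maxmin ((1 - eps) * lam) M N u Se"
    unfolding solves_maxmin_def using Se_partition by blast
qed

end
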